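(* Let $\mathscr{H}$ be a complex Hilbert space, $N(\cdot)$ a norm on $\mathbb{B}(\mathscr{H})$, and $B,C\in\mathbb{B}(\mathscr{H})$. Then for every $\theta\in\mathbb{R}$, $$\frac12 w_N(B+e^{i\theta}C)+\frac12|w_N(B)-w_N(C)|\leq w_{(N,e)}(B,C).$$
   Context: For $T\in\mathbb{B}(\mathscr{H})$: $\Re(T)=\frac12(T+T^* )$ and $w_N(T)=\sup_{\theta\in\mathbb{R}}N(\Re(e^{i\theta}T))$. For $B,C\in\mathbb{B}(\mathscr{H})$, $w_{(N,e)}(B,C)=\sup_{\lambda_1,\lambda_2\in\mathbb{C},\ |\lambda_1|^2+|\lambda_2|^2\leq 1}\sup_{\theta\in\mathbb{R}} N(\Re(e^{i\theta}(\lambda_1B+\lambda_2C)))$. *)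

theory Defs
  imports "HOL-Analysis.Analysis"
begin

text \<open>Convention: the inner product is conjugate-linear in the first argument.\<close>

class cvector = real_vector +
  fixes scaleC :: "complex \<Rightarrow> 'a \<Rightarrow> 'a"
  assumes scaleC_add_right: "scaleC a (x + y) = scaleC a x + scaleC a y"
    and scaleC_add_left: "scaleC (a + b) x = scaleC a x + scaleC b x"
    and scaleC_scaleC: "scaleC a (scaleC b x) = scaleC (a * b) x"
    and scaleC_one: "scaleC 1 x = x"
    and scaleR_scaleC: "scaleR r x = scaleC (complex_of_real r) x"

class complex_inner = cvector + real_normed_vector +
  fixes cinner :: "'a \<Rightarrow> 'a \<Rightarrow> complex"
  assumes cinner_commute: "cinner x y = cnj (cinner y x)"
    and cinner_add_left: "cinner (x + y) z = cinner x z + cinner y z"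
    and cinner_scaleC_left: "cinner (scaleC a x) y = cnj a * cinner x y"
    and cinner_self_real_nonneg: "Im (cinner x x) = 0 \<and> 0 \<le> Re (cinner x x)"
    and cinner_self_eq_zero: "cinner x x = 0 \<longleftrightarrow> x = 0"
    and norm_eq_sqrt_cinner: "norm x = sqrt (Re (cinner x x))"

class chilbert_space = complex_inner + complete_space

definition bounded_ops :: "('a::complex_inner \<Rightarrow> 'a) set" where
  "bounded_ops = {T. (\<forall>x y. T (x + y) = T x + T y) \<and> (\<forall>c x. T (scaleC c x) = scaleC c (T x))
                     \<and> (\<exists>K. \<forall>x. norm (T x) \<le> norm x * K)}"

definition cadj :: "('a::complex_inner \<Rightarrow> 'a) \<Rightarrow> 'a \<Rightarrow> 'a" where
  "cadj T = (SOME S. \<forall>x y. cinner (T x) y = cinner x (S y))"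

definition op_scale :: "complex \<Rightarrow> ('a::complex_inner \<Rightarrow> 'a) \<Rightarrow> 'a \<Rightarrow> 'a" where
  "op_scale c T = (\<lambda>x. scaleC c (T x))"

definition op_Re :: "('a::complex_inner \<Rightarrow> 'a) \<Rightarrow> 'a \<Rightarrow> 'a" where
  "op_Re T = (\<lambda>x. scaleR (1/2) (T x + cadj T x))"

definition is_op_norm :: "(('a::complex_inner \<Rightarrow> 'a) \<Rightarrow> real) \<Rightarrow> bool" where
  "is_op_norm N \<longleftrightarrow>
     (\<forall>T\<in>bounded_ops. 0 \<le> N T) \<and>
     (\<forall>T\<in>bounded_ops. N T = 0 \<longleftrightarrow> T = (\<lambda>x. 0)) \<and>
     (\<forall>c. \<forall>T\<in>bounded_ops. N (op_scale c T) = cmod c * N T) \<and>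
     (\<forall>S\<in>bounded_ops. \<forall>T\<in>bounded_ops. N (\<lambda>x. S x + T x) \<le> N S + N T)"

definition wN :: "(('a::complex_inner \<Rightarrow> 'a) \<Rightarrow> real) \<Rightarrow> ('a \<Rightarrow> 'a) \<Rightarrow> real" where
  "wN N T = (SUP \<theta>::real. N (op_Re (op_scale (cis \<theta>) T)))"

definition wNe :: "(('a::complex_inner \<Rightarrow> 'a) \<Rightarrow> real) \<Rightarrow> ('a \<Rightarrow> 'a) \<Rightarrow> ('a \<Rightarrow> 'a) \<Rightarrow> real" where
  "wNe N B C = (SUP l \<in> {(l1, l2). (cmod l1)\<^sup>2 + (cmod l2)\<^sup>2 \<le> 1}.
                  SUP \<theta>::real. N (op_Re (op_scale (cis \<theta>)
                     (\<lambda>x. scaleC (fst l) (B x) + scaleC (snd l) (C x)))))"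

end

theory Submission
  imports Defs
begin

(* Re(e^{it} T) is real-linear in T, so w_N is subadditive and w_N(cT) <= |c| w_N(T) (writing
   c = |c| e^{i Arg c}, the phase of c only shifts t); hence
   w_N(B + e^{i\<theta>} C) <= w_N(B) + w_N(C).  The choices (\<lambda>1, \<lambda>2) = (1, 0) and (0, 1) give
   max (w_N B) (w_N C) <= w_(N,e)(B, C), and (a + b)/2 + |a - b|/2 = max a b.  The suprema are
   finite because N(Re T) <= (N T + N (adj T))/2.  The adjoint is specified only by Hilbert
   choice, so all its properties rest on its existence, i.e. on the Riesz representation
   theorem, which follows from the existence of a closest point in the kernel of a functional. *)

interpretation scaleC_left: additive "\<lambda>a. scaleC a (x::'a::cvector)"
  by standard (rule scaleC_add_left)

interpretation scaleC_right: additive "\<lambda>x. scaleC a (x::'a::cvector)"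
  by standard (rule scaleC_add_right)

interpretation cinner_left: additive "\<lambda>x. cinner (x::'a::complex_inner) y"
  by standard (rule cinner_add_left)

lemma cinner_add_right: "cinner (x::'a::complex_inner) (y + z) = cinner x y + cinner x z"
  by (metis cinner_add_left cinner_commute complex_cnj_add)

interpretation cinner_right: additive "\<lambda>y. cinner (x::'a::complex_inner) y"
  by standard (rule cinner_add_right)

declare scaleC_left.zero [simp] scaleC_right.zero [simp] cinner_left.zero [simp]
  cinner_right.zero [simp]

lemma cinner_scaleC_right: "cinner (x::'a::complex_inner) (scaleC a y) = a * cinner x y"
  by (metis cinner_commute cinner_scaleC_left complex_cnj_cnj complex_cnj_mult)

lemma cinner_self: "cinner (x::'a::complex_inner) x = complex_of_real ((norm x)\<^sup>2)"
  using cinner_self_real_nonneg[of x] by (simp add: norm_eq_sqrt_cinner complex_eq_iff)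

lemma norm_sq_eq_Re_cinner: "(norm (x::'a::complex_inner))\<^sup>2 = Re (cinner x x)"
  by (simp add: cinner_self)

lemma cinner_ext:
  assumes "\<And>x. cinner x a = cinner x (b::'a::complex_inner)"
  shows "a = b"
  using assms[of "a - b"] cinner_self_eq_zero[of "a - b"] by (simp add: cinner_right.diff)

lemma norm_diff_scaleC_sq:
  "(norm (u - scaleC t (v::'a::complex_inner)))\<^sup>2
     = (norm u)\<^sup>2 - 2 * Re (t * cinner u v) + (cmod t)\<^sup>2 * (norm v)\<^sup>2"
proof -
  have "cinner (u - scaleC t v) (u - scaleC t v)
      = cinner u u - t * cinner u v - cnj (t * cinner u v) + cnj t * t * cinner v v"
    by (simp add: cinner_left.diff cinner_right.diff cinner_scaleC_left cinner_scaleC_right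
        algebra_simps cinner_commute[of v u])
  moreover have "Re (cnj t * t * cinner v v) = (cmod t)\<^sup>2 * (norm v)\<^sup>2"
    by (simp add: cinner_self complex_norm_square[symmetric] mult.commute)
  ultimately show ?thesis
    by (simp only: norm_sq_eq_Re_cinner minus_complex.sel plus_complex.sel complex_cnj) simp
qed

lemma norm_scaleC: "norm (scaleC a (x::'a::complex_inner)) = cmod a * norm x"
  using norm_diff_scaleC_sq[of 0 a x]
  by (simp add: power_mult_distrib[symmetric] power2_eq_iff_nonneg)

lemma norm_diff_projection_sq:
  fixes u v :: "'a::complex_inner"
  assumes "v \<noteq> 0"
  shows "(norm (u - scaleC (cnj (cinner u v) / complex_of_real ((norm v)\<^sup>2)) v))\<^sup>2
           = (norm u)\<^sup>2 - (cmod (cinner u v))\<^sup>2 / (norm v)\<^sup>2"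
proof -
  define r where "r = (norm v)\<^sup>2"
  have r: "r > 0" using assms by (simp add: r_def)
  have Re: "Re (cnj (cinner u v) / complex_of_real r * cinner u v) = (cmod (cinner u v))\<^sup>2 / r"
    using cmod_power2[of "cinner u v"] by (simp add: power2_eq_square)
  have cmod: "(cmod (cnj (cinner u v) / complex_of_real r))\<^sup>2 * r = (cmod (cinner u v))\<^sup>2 / r"
    using r by (simp add: norm_divide power2_eq_square)
  show ?thesis
    unfolding norm_diff_scaleC_sq r_def[symmetric] using Re cmod by linarith
qed

lemma cinner_cauchy_schwarz: "cmod (cinner (x::'a::complex_inner) y) \<le> norm x * norm y"
proof (cases "y = 0")
  case False
  then have "(cmod (cinner x y))\<^sup>2 / (norm y)\<^sup>2 \<le> (norm x)\<^sup>2"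
    using norm_diff_projection_sq[of y x] zero_le_power2 by (metis diff_ge_0_iff_ge)
  then have "(cmod (cinner x y))\<^sup>2 \<le> (norm x * norm y)\<^sup>2"
    using False by (simp add: divide_le_eq power_mult_distrib)
  then show ?thesis by (rule power2_le_imp_le) simp
qed simp

lemma parallelogram_law:
  "(norm (p - q))\<^sup>2 + (norm (p + q))\<^sup>2 = 2 * (norm p)\<^sup>2 + 2 * (norm (q::'a::complex_inner))\<^sup>2"
  using norm_diff_scaleC_sq[of p 1 q] norm_diff_scaleC_sq[of p "-1" q]
  by (simp add: scaleC_one scaleC_left.minus)

lemma apollonius:
  fixes x a b :: "'a::complex_inner"
  shows "(norm (a - b))\<^sup>2
           = 2 * (norm (x - a))\<^sup>2 + 2 * (norm (x - b))\<^sup>2 - 4 * (norm (x - scaleR (1/2) (a + b)))\<^sup>2"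
proof -
  have "(x - b) - (x - a) = a - b" by simp
  moreover have "(x - b) + (x - a) = scaleR 2 (x - scaleR (1/2) (a + b))"
    by (simp add: algebra_simps scaleR_2)
  ultimately show ?thesis
    using parallelogram_law[of "x - b" "x - a"] by (simp add: power_mult_distrib)
qed

lemma convex_minimizing_sequence_Cauchy:
  fixes X :: "nat \<Rightarrow> 'a::complex_inner"
  assumes "convex S" "\<And>n. X n \<in> S"
    and D_le: "\<And>y. y \<in> S \<Longrightarrow> D \<le> (norm (x - y))\<^sup>2"
    and X_le: "\<And>n. (norm (x - X n))\<^sup>2 \<le> D + inverse (Suc n)"
  shows "Cauchy X"
proof -
  have close: "(norm (X m - X n))\<^sup>2 \<le> 4 * inverse (Suc k)" if "k \<le> m" "k \<le> n" for k m n
  proof -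
    have "scaleR (1/2) (X m + X n) \<in> S"
      using assms(1,2) by (simp add: convex_def scaleR_add_right)
    then have "(norm (X m - X n))\<^sup>2 \<le> 2 * inverse (Suc m) + 2 * inverse (Suc n)"
      using apollonius[of "X m" "X n" x] D_le X_le[of m] X_le[of n] by fastforce
    also have "\<dots> \<le> 4 * inverse (Suc k)"
    proof -
      have inverse_le: "inverse (real (Suc j)) \<le> inverse (Suc k)" if "k \<le> j" for j
        by (rule le_imp_inverse_le) (use that in auto)
      show ?thesis using inverse_le[OF that(1)] inverse_le[OF that(2)] by linarith
    qed
    finally show ?thesis .
  qed
  show "Cauchy X"
  proof (rule CauchyI)
    fix e :: real
    assume "0 < e"
    then obtain k where k: "inverse (Suc k) < e\<^sup>2 / 4"
      using reals_Archimedean[of "e\<^sup>2 / 4"] by auto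
    have "norm (X m - X n) < e" if "k \<le> m" "k \<le> n" for m n
    proof -
      have "(norm (X m - X n))\<^sup>2 < e\<^sup>2" using close[OF that] k by linarith
      then show ?thesis using \<open>0 < e\<close> by (simp add: power_less_imp_less_base)
    qed
    then show "\<exists>M. \<forall>m\<ge>M. \<forall>n\<ge>M. norm (X m - X n) < e" by blast
  qed
qed

(* The library's closest_point_exists needs a Heine-Borel space; here completeness and the
   parallelogram law make a minimising sequence Cauchy instead. *)
lemma convex_closest_point_exists:
  fixes S :: "'a::{complex_inner, complete_space} set"
  assumes "closed S" "convex S" "S \<noteq> {}"
  shows "\<exists>m\<in>S. \<forall>y\<in>S. norm (x - m) \<le> norm (x - y)"
proof -
  define D where "D = (INF y\<in>S. (norm (x - y))\<^sup>2)"
  have bdd: "bdd_below ((\<lambda>y. (norm (x - y))\<^sup>2) ` S)" by (rule bdd_belowI2[where m=0]) simp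
  have D_le: "D \<le> (norm (x - y))\<^sup>2" if "y \<in> S" for y
    unfolding D_def using bdd that by (rule cINF_lower)
  have "\<exists>y\<in>S. (norm (x - y))\<^sup>2 < D + inverse (Suc n)" for n
    using cINF_less_iff[OF \<open>S \<noteq> {}\<close> bdd, of "D + inverse (Suc n)"] by (simp add: D_def)
  then obtain X where X: "\<And>n. X n \<in> S" "\<And>n. (norm (x - X n))\<^sup>2 < D + inverse (Suc n)"
    by metis
  then have X_le: "\<And>n. (norm (x - X n))\<^sup>2 \<le> D + inverse (Suc n)"
    using less_imp_le by blast
  have "Cauchy X"
    using \<open>convex S\<close> X(1) D_le X_le by (rule convex_minimizing_sequence_Cauchy)
  then obtain m where lim: "X \<longlonglongrightarrow> m"
    using Cauchy_convergent_iff convergent_def by blast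
  have "m \<in> S"
    using \<open>closed S\<close> X(1) lim by (rule closed_sequentially)
  have "(\<lambda>n. (norm (x - X n))\<^sup>2) \<longlonglongrightarrow> (norm (x - m))\<^sup>2"
    by (intro tendsto_intros lim)
  then have "(norm (x - m))\<^sup>2 \<le> D"
    using X_le by (intro LIMSEQ_le[OF _ LIMSEQ_inverse_real_of_nat_add]) auto
  then have "\<forall>y\<in>S. norm (x - m) \<le> norm (x - y)"
    using D_le by (meson norm_ge_zero order_trans power2_le_imp_le)
  with \<open>m \<in> S\<close> show ?thesis by blast
qed

lemma closest_point_orthogonal:
  fixes V :: "'a::complex_inner set"
  assumes add: "\<And>a b. a \<in> V \<Longrightarrow> b \<in> V \<Longrightarrow> a + b \<in> V"
    and scale: "\<And>c a. a \<in> V \<Longrightarrow> scaleC c a \<in> V"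
    and closest: "m \<in> V" "\<forall>y\<in>V. norm (x - m) \<le> norm (x - y)"
    and "v \<in> V"
  shows "cinner (x - m) v = 0"
proof (cases "v = 0")
  case False
  define t where "t = cnj (cinner (x - m) v) / complex_of_real ((norm v)\<^sup>2)"
  have "m + scaleC t v \<in> V" using add scale closest(1) \<open>v \<in> V\<close> by blast
  then have "norm (x - m) \<le> norm ((x - m) - scaleC t v)"
    using closest(2) by (simp add: algebra_simps)
  then have "(norm (x - m))\<^sup>2 \<le> (norm (x - m))\<^sup>2 - (cmod (cinner (x - m) v))\<^sup>2 / (norm v)\<^sup>2"
    using norm_diff_projection_sq[OF False, of "x - m"] unfolding t_def
    by (metis norm_ge_zero power_mono)
  then show ?thesis using False by (simp add: divide_le_0_iff)
qed simp

theorem riesz_representation: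
  fixes f :: "'a::chilbert_space \<Rightarrow> complex"
  assumes add: "\<And>x y. f (x + y) = f x + f y"
    and scale: "\<And>c x. f (scaleC c x) = c * f x"
    and bounded: "\<And>x. cmod (f x) \<le> norm x * K"
  shows "\<exists>z. \<forall>x. f x = cinner z x"
proof (cases "\<forall>x. f x = 0")
  case True
  then show ?thesis by (intro exI[of _ 0]) simp
next
  case False
  then obtain x0 where "f x0 \<noteq> 0" by blast
  interpret f: additive f by standard (rule add)
  have "bounded_linear f"
    using add bounded scale[of "complex_of_real r" for r]
    by (intro bounded_linear_intro[of f K]) (simp_all add: scaleR_scaleC scaleR_conv_of_real)
  define V where "V = {x. f x = 0}"
  have "closed V"
    unfolding V_def
    by (intro closed_Collect_eq linear_continuous_on \<open>bounded_linear f\<close> continuous_on_const)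
  moreover have "convex V"
    using \<open>bounded_linear f\<close> unfolding V_def
    by (intro subspace_imp_convex linear_subspace_kernel bounded_linear.linear)
  moreover have "V \<noteq> {}" using f.zero by (auto simp: V_def)
  ultimately obtain m where m: "m \<in> V" "\<forall>y\<in>V. norm (x0 - m) \<le> norm (x0 - y)"
    using convex_closest_point_exists by blast
  define u where "u = x0 - m"
  have orth: "cinner u v = 0" if "f v = 0" for v
    unfolding u_def using m that
    by (intro closest_point_orthogonal[of V]) (auto simp: V_def add scale)
  have "f u \<noteq> 0" using m(1) \<open>f x0 \<noteq> 0\<close> by (simp add: u_def f.diff V_def)
  then have "cinner u u \<noteq> 0" using f.zero by (auto simp: cinner_self_eq_zero)
  have "f x = cinner (scaleC (cnj (f u / cinner u u)) u) x" for x
  proof -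
    have "f (scaleC (f u) x - scaleC (f x) u) = 0" by (simp add: f.diff scale)
    from orth[OF this] have "f u * cinner u x = f x * cinner u u"
      by (simp add: cinner_right.diff cinner_scaleC_right)
    with \<open>cinner u u \<noteq> 0\<close> show ?thesis
      by (simp add: cinner_scaleC_left field_simps)
  qed
  then show ?thesis by blast
qed

lemma bounded_opsD:
  assumes "T \<in> bounded_ops"
  shows "T (x + y) = T x + T y" "T (scaleC c x) = scaleC c (T x)"
    and "\<exists>K\<ge>0. \<forall>x. norm (T x) \<le> norm x * K"
proof -
  show "T (x + y) = T x + T y" "T (scaleC c x) = scaleC c (T x)"
    using assms by (auto simp: bounded_ops_def)
  from assms obtain K where "\<forall>x. norm (T x) \<le> norm x * K"
    by (auto simp: bounded_ops_def)
  then have "\<forall>x. norm (T x) \<le> norm x * max K 0"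
    by (meson max.cobounded1 mult_left_mono norm_ge_zero order_trans)
  then show "\<exists>K\<ge>0. \<forall>x. norm (T x) \<le> norm x * K" by (intro exI[of _ "max K 0"]) simp
qed

lemma bounded_ops_add:
  assumes "S \<in> bounded_ops" "T \<in> bounded_ops"
  shows "(\<lambda>x. S x + T x) \<in> bounded_ops"
proof -
  obtain K L where K: "\<And>x. norm (S x) \<le> norm x * K"
    and L: "\<And>x. norm (T x) \<le> norm x * L"
    using bounded_opsD(3) assms by metis
  have "norm (S x + T x) \<le> norm x * (K + L)" for x
    using norm_triangle_ineq[of "S x" "T x"] K[of x] L[of x] by (simp add: distrib_left)
  then show ?thesis
    using bounded_opsD(1,2)[OF assms(1)] bounded_opsD(1,2)[OF assms(2)]
    by (auto simp: bounded_ops_def scaleC_add_right)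
qed

lemma bounded_ops_scale:
  assumes "(T::'a::complex_inner \<Rightarrow> 'a) \<in> bounded_ops"
  shows "op_scale c T \<in> bounded_ops"
proof -
  obtain K where K: "\<And>x. norm (T x) \<le> norm x * K"
    using bounded_opsD(3)[OF assms] by blast
  have "norm (scaleC c (T x)) \<le> norm x * (cmod c * K)" for x
    using mult_left_mono[OF K[of x], of "cmod c"] by (simp add: norm_scaleC ac_simps)
  moreover have "scaleC c (scaleC d (T x)) = scaleC d (scaleC c (T x))" for d x
    by (simp add: scaleC_scaleC mult.commute)
  ultimately show ?thesis
    using bounded_opsD(1,2)[OF assms] unfolding bounded_ops_def op_scale_def
    by (auto simp: scaleC_add_right)
qed

lemma cadj_unique:
  assumes "\<forall>x y. cinner (T x) y = cinner x (S y)"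
  shows "cadj T = S"
proof
  fix y
  have "\<forall>x y. cinner (T x) y = cinner x (cadj T y)"
    unfolding cadj_def by (rule someI[of _ S]) (rule assms)
  with assms show "cadj T y = S y" by (metis cinner_ext)
qed

lemma cinner_cadj:
  assumes "(T::'a::chilbert_space \<Rightarrow> 'a) \<in> bounded_ops"
  shows "cinner (T x) y = cinner x (cadj T y)"
proof -
  obtain K where K: "\<And>x. norm (T x) \<le> norm x * K"
    using bounded_opsD(3)[OF assms] by blast
  have "\<exists>z. \<forall>x. cinner y (T x) = cinner z x" for y
  proof (rule riesz_representation)
    show "cinner y (T (a + b)) = cinner y (T a) + cinner y (T b)" for a b
      by (simp add: bounded_opsD(1)[OF assms] cinner_add_right)
    show "cinner y (T (scaleC c a)) = c * cinner y (T a)" for c a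
      by (simp add: bounded_opsD(2)[OF assms] cinner_scaleC_right)
    show "cmod (cinner y (T a)) \<le> norm a * (norm y * K)" for a
      using cinner_cauchy_schwarz[of y "T a"] mult_left_mono[OF K[of a], of "norm y"]
      by (simp add: ac_simps)
  qed
  then obtain S where "\<And>y x. cinner y (T x) = cinner (S y) x" by metis
  then have "\<forall>x y. cinner (T x) y = cinner x (S y)"
    by (metis cinner_commute)
  then show ?thesis using cadj_unique by metis
qed

lemma cadj_in_bounded_ops:
  assumes T: "(T::'a::chilbert_space \<Rightarrow> 'a) \<in> bounded_ops"
  shows "cadj T \<in> bounded_ops"
proof -
  obtain K where K: "K \<ge> 0" "\<And>x. norm (T x) \<le> norm x * K"
    using bounded_opsD(3)[OF T] by blast
  have "norm (cadj T y) \<le> norm y * K" for y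
  proof -
    have "(norm (cadj T y))\<^sup>2 = Re (cinner (T (cadj T y)) y)"
      by (simp add: norm_sq_eq_Re_cinner cinner_cadj[OF T])
    also have "\<dots> \<le> norm (T (cadj T y)) * norm y"
      using complex_Re_le_cmod cinner_cauchy_schwarz order_trans by blast
    also have "\<dots> \<le> norm (cadj T y) * (norm y * K)"
      using mult_right_mono[OF K(2)[of "cadj T y"], of "norm y"] by (simp add: ac_simps)
    finally have "norm (cadj T y) * norm (cadj T y) \<le> norm (cadj T y) * (norm y * K)"
      by (simp add: power2_eq_square)
    then show ?thesis
      using K(1) by (cases "cadj T y = 0") (simp_all add: mult_le_cancel_left_pos)
  qed
  moreover have "cadj T (a + b) = cadj T a + cadj T b" for a b
    by (rule cinner_ext) (simp add: cinner_cadj[OF T, symmetric] cinner_add_right)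
  moreover have "cadj T (scaleC c a) = scaleC c (cadj T a)" for c a
    by (rule cinner_ext) (simp add: cinner_cadj[OF T, symmetric] cinner_scaleC_right)
  ultimately show ?thesis unfolding bounded_ops_def by blast
qed

lemma cadj_add:
  assumes "(S::'a::chilbert_space \<Rightarrow> 'a) \<in> bounded_ops" "T \<in> bounded_ops"
  shows "cadj (\<lambda>x. S x + T x) = (\<lambda>y. cadj S y + cadj T y)"
  by (rule cadj_unique)
    (simp add: cinner_add_left cinner_add_right cinner_cadj[OF assms(1)] cinner_cadj[OF assms(2)])

lemma cadj_scale:
  assumes "(T::'a::chilbert_space \<Rightarrow> 'a) \<in> bounded_ops"
  shows "cadj (op_scale c T) = op_scale (cnj c) (cadj T)"
  by (rule cadj_unique)
    (simp add: op_scale_def cinner_scaleC_left cinner_scaleC_right cinner_cadj[OF assms])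

lemma op_Re_conv_op_scale:
  "op_Re T = (\<lambda>x. op_scale (1/2) T x + op_scale (1/2) (cadj T) x)"
  unfolding op_Re_def op_scale_def by (simp add: scaleR_scaleC scaleC_add_right)

lemma op_Re_in_bounded_ops:
  assumes "(T::'a::chilbert_space \<Rightarrow> 'a) \<in> bounded_ops"
  shows "op_Re T \<in> bounded_ops"
  unfolding op_Re_conv_op_scale
  by (intro bounded_ops_add bounded_ops_scale cadj_in_bounded_ops assms)

lemma op_Re_add:
  assumes "(S::'a::chilbert_space \<Rightarrow> 'a) \<in> bounded_ops" "T \<in> bounded_ops"
  shows "op_Re (\<lambda>x. S x + T x) = (\<lambda>x. op_Re S x + op_Re T x)"
  unfolding op_Re_def cadj_add[OF assms] by (simp add: scaleR_add_right ac_simps)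

lemma op_Re_scale_real:
  assumes "(T::'a::chilbert_space \<Rightarrow> 'a) \<in> bounded_ops"
  shows "op_Re (op_scale (complex_of_real r) T) = op_scale (complex_of_real r) (op_Re T)"
  unfolding op_Re_def cadj_scale[OF assms]
  by (simp add: op_scale_def scaleR_scaleC scaleC_add_right scaleC_scaleC mult.commute)

context
  fixes N :: "('a::chilbert_space \<Rightarrow> 'a) \<Rightarrow> real"
  assumes N: "is_op_norm N"
begin

lemma op_norm_nonneg: "T \<in> bounded_ops \<Longrightarrow> 0 \<le> N T"
  and op_norm_scale: "T \<in> bounded_ops \<Longrightarrow> N (op_scale c T) = cmod c * N T"
  and op_norm_triangle:
    "S \<in> bounded_ops \<Longrightarrow> T \<in> bounded_ops \<Longrightarrow> N (\<lambda>x. S x + T x) \<le> N S + N T"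
  using N unfolding is_op_norm_def by blast+

lemma op_norm_op_Re_le:
  assumes T: "T \<in> bounded_ops"
  shows "N (op_Re (op_scale (cis t) T)) \<le> (N T + N (cadj T)) / 2"
proof -
  let ?S = "op_scale (cis t) T"
  have S: "?S \<in> bounded_ops" "cadj ?S \<in> bounded_ops"
    using T by (simp_all add: bounded_ops_scale cadj_in_bounded_ops)
  have "N (op_Re ?S) \<le> N (op_scale (1/2) ?S) + N (op_scale (1/2) (cadj ?S))"
    unfolding op_Re_conv_op_scale by (intro op_norm_triangle bounded_ops_scale S)
  also have "\<dots> = (N T + N (cadj T)) / 2"
    using T S by (simp add: op_norm_scale cadj_scale cadj_in_bounded_ops)
  finally show ?thesis .
qed

lemma wN_upper:
  assumes "T \<in> bounded_ops"
  shows "N (op_Re (op_scale (cis t) T)) \<le> wN N T"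
  unfolding wN_def
  by (rule cSUP_upper[OF UNIV_I], rule bdd_aboveI2[where M="(N T + N (cadj T)) / 2"])
    (rule op_norm_op_Re_le[OF assms])

lemma wN_nonneg: "T \<in> bounded_ops \<Longrightarrow> 0 \<le> wN N T"
  by (meson bounded_ops_scale op_Re_in_bounded_ops op_norm_nonneg order_trans wN_upper)

lemma wN_triangle:
  assumes "S \<in> bounded_ops" "T \<in> bounded_ops"
  shows "wN N (\<lambda>x. S x + T x) \<le> wN N S + wN N T"
  unfolding wN_def[of N "\<lambda>x. S x + T x"]
proof (rule cSUP_least)
  fix t
  have S: "op_scale (cis t) S \<in> bounded_ops" "op_scale (cis t) T \<in> bounded_ops"
    using assms by (simp_all add: bounded_ops_scale)
  have "op_Re (op_scale (cis t) (\<lambda>x. S x + T x))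
          = (\<lambda>x. op_Re (op_scale (cis t) S) x + op_Re (op_scale (cis t) T) x)"
    using op_Re_add[OF S] by (simp add: op_scale_def scaleC_add_right)
  then have "N (op_Re (op_scale (cis t) (\<lambda>x. S x + T x)))
               \<le> N (op_Re (op_scale (cis t) S)) + N (op_Re (op_scale (cis t) T))"
    using S by (simp add: op_norm_triangle op_Re_in_bounded_ops)
  also have "\<dots> \<le> wN N S + wN N T"
    using assms by (intro add_mono wN_upper)
  finally show "N (op_Re (op_scale (cis t) (\<lambda>x. S x + T x))) \<le> wN N S + wN N T" .
qed simp

lemma wN_scale_le:
  assumes "T \<in> bounded_ops"
  shows "wN N (op_scale c T) \<le> cmod c * wN N T"
  unfolding wN_def[of N "op_scale c T"]
proof (rule cSUP_least)
  fix t
  have "op_scale (cis t) (op_scale c T)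
          = op_scale (complex_of_real (cmod c)) (op_scale (cis (t + Arg c)) T)"
  proof -
    have "c * cis t = (complex_of_real (cmod c) * cis (Arg c)) * cis t"
      using rcis_cmod_Arg[of c] by (simp add: rcis_def)
    also have "\<dots> = complex_of_real (cmod c) * cis (t + Arg c)"
      by (simp add: mult.assoc cis_mult add.commute)
    finally show ?thesis by (simp add: op_scale_def scaleC_scaleC mult.commute)
  qed
  then have "N (op_Re (op_scale (cis t) (op_scale c T)))
               = cmod c * N (op_Re (op_scale (cis (t + Arg c)) T))"
    using assms
    by (simp add: op_Re_scale_real bounded_ops_scale op_Re_in_bounded_ops op_norm_scale)
  also have "\<dots> \<le> cmod c * wN N T"
    using assms by (intro mult_left_mono wN_upper) simp_all
  finally show "N (op_Re (op_scale (cis t) (op_scale c T))) \<le> cmod c * wN N T" .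
qed simp

lemma wN_lincomb_le:
  assumes "B \<in> bounded_ops" "C \<in> bounded_ops"
  shows "wN N (\<lambda>x. scaleC a (B x) + scaleC b (C x)) \<le> cmod a * wN N B + cmod b * wN N C"
  using wN_triangle[of "op_scale a B" "op_scale b C"] wN_scale_le[of B a] wN_scale_le[of C b]
    assms
  by (simp add: bounded_ops_scale) (simp add: op_scale_def)

lemma wN_le_wNe:
  assumes "B \<in> bounded_ops" "C \<in> bounded_ops" "(cmod a)\<^sup>2 + (cmod b)\<^sup>2 \<le> 1"
  shows "wN N (\<lambda>x. scaleC a (B x) + scaleC b (C x)) \<le> wNe N B C"
proof -
  define D :: "(complex \<times> complex) set" where "D = {(l1, l2). (cmod l1)\<^sup>2 + (cmod l2)\<^sup>2 \<le> 1}"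
  define w where "w l = wN N (\<lambda>x. scaleC (fst l) (B x) + scaleC (snd l) (C x))" for l
  have "w l \<le> wN N B + wN N C" if "l \<in> D" for l
  proof -
    have "(cmod (fst l))\<^sup>2 + (cmod (snd l))\<^sup>2 \<le> 1"
      using that by (simp add: D_def case_prod_beta)
    then have "(cmod (fst l))\<^sup>2 \<le> 1" "(cmod (snd l))\<^sup>2 \<le> 1"
      using zero_le_power2[of "cmod (fst l)"] zero_le_power2[of "cmod (snd l)"] by linarith+
    then have "cmod (fst l) \<le> 1" "cmod (snd l) \<le> 1"
      by (simp_all add: abs_square_le_1)
    then have "cmod (fst l) * wN N B \<le> wN N B" "cmod (snd l) * wN N C \<le> wN N C"
      using wN_nonneg assms(1,2) by (simp_all add: mult_left_le_one_le)
    then show ?thesis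
      using wN_lincomb_le[OF assms(1,2), of "fst l" "snd l"] unfolding w_def by linarith
  qed
  then have "bdd_above (w ` D)" by (rule bdd_aboveI2)
  moreover have "wNe N B C = (SUP l \<in> D. w l)"
    unfolding wNe_def w_def wN_def D_def ..
  ultimately show ?thesis
    using assms(3) cSUP_upper[of "(a, b)" D w] by (simp add: D_def w_def)
qed

end

theorem theorem2p11:
  fixes N :: "('h::chilbert_space \<Rightarrow> 'h) \<Rightarrow> real"
    and B C :: "'h \<Rightarrow> 'h" and \<theta> :: real
  assumes "is_op_norm N" and "B \<in> bounded_ops" and "C \<in> bounded_ops"
  shows "1/2 * wN N (\<lambda>x. B x + scaleC (cis \<theta>) (C x)) + 1/2 * \<bar>wN N B - wN N C\<bar>
           \<le> wNe N B C"
proof -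
  have "wN N (\<lambda>x. B x + scaleC (cis \<theta>) (C x)) \<le> wN N B + wN N C"
    using wN_lincomb_le[OF assms, of 1 "cis \<theta>"] by (simp add: scaleC_one)
  moreover have "wN N B \<le> wNe N B C"
    using wN_le_wNe[OF assms, of 1 0] by (simp add: scaleC_one)
  moreover have "wN N C \<le> wNe N B C"
    using wN_le_wNe[OF assms, of 0 1] by (simp add: scaleC_one)
  ultimately show ?thesis by (simp add: abs_if field_simps)
qed

end
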